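(* Let $\{(x^k,y^k)\}$ be generated by the LSAAL algorithm described in the context, under the standing bounds (D2) and (D3). Then for $k=1,2,\dots$, $$\|x^{k+1}-x^k\|\le\sigma\Big\{[\kappa_f+\nu_g\kappa_g\sigma]+\kappa_g\|y^k\|\Big\}.$$
   Context: $\mathcal{Y}$ is a finite-dimensional Hilbert space, $\mathcal{K}\subset\mathcal{Y}$ a closed convex cone, $\mathcal{K}^\circ=\{v:\langle v,w\rangle\le0\ \forall w\in\mathcal{K}\}$ its polar cone, $\Pi_{\mathcal{K}^\circ}$ the metric projection onto $\mathcal{K}^\circ$. $X\subset\mathbb{R}^n$ is a nonempty convex compact set contained in an open convex set $\mathcal{O}$. $\xi$ is a random vector supported on $\Xi\subseteq\mathbb{R}^q$; $F:\mathcal{O}\times\Xi\to\mathbb{R}$, $G:\mathcal{O}\times\Xi\to\mathcal{Y}$ are, for every $\xi$, smooth in $x$, with gradient $\nabla_xF(x,\xi)$ and derivative $\mathrm{D}_xG(x,\xi)$. Samples $\xi_1,\xi_2,\dots$ of $\xi$ are given. (D2) There is $\nu_g>0$ with $\|G(x,\xi)\|\le\nu_g$ for all $x\in\mathcal{O}$ and all $\xi$. (D3) There are $\kappa_f,\kappa_g>0$ with $\|\nabla_xF(x,\xi)\|\le\kappa_f$ and $\|\mathrm{D}_xG(x,\xi)\|\le\kappa_g$ (operator norm) for all $x\in\mathcal{O}$ and all $\xi$. LSAAL algorithm: choose $x^1\in X$, $y^1=0$, $\sigma>0$. For $k=1,2,\dots$: $l_f^k(x)=F(x^k,\xi_k)+\langle\nabla_xF(x^k,\xi_k),x-x^k\rangle$,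 $l_g^k(x)=G(x^k,\xi_k)+\mathrm{D}_xG(x^k,\xi_k)(x-x^k)$, $l_\sigma^k(x,y)=l_f^k(x)+\frac{1}{2\sigma}[\|\Pi_{\mathcal{K}^\circ}(y+\sigma l_g^k(x))\|^2-\|y\|^2]$, $x^{k+1}=\mathrm{argmin}_{x\in X}\{l_\sigma^k(x,y^k)+\frac{1}{2\sigma}\|x-x^k\|^2\}$, $y^{k+1}=\Pi_{\mathcal{K}^\circ}(y^k+\sigma l_g^k(x^{k+1}))$. *)

theory Defs
  imports "HOL-Analysis.Analysis"
begin

definition polar_cone :: "'a::real_inner set \<Rightarrow> 'a set" where
  "polar_cone K = {v. \<forall>w\<in>K. inner v w \<le> 0}"

definition proj_polar :: "'a::euclidean_space set \<Rightarrow> 'a \<Rightarrow> 'a" where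
  "proj_polar K v = closest_point (polar_cone K) v"

definition lin_f :: "('x::euclidean_space \<Rightarrow> 'q \<Rightarrow> real) \<Rightarrow> ('x \<Rightarrow> 'q \<Rightarrow> 'x)
    \<Rightarrow> 'x \<Rightarrow> 'q \<Rightarrow> 'x \<Rightarrow> real" where
  "lin_f F gradF xk xik z = F xk xik + inner (gradF xk xik) (z - xk)"

definition lin_g :: "('x::euclidean_space \<Rightarrow> 'q \<Rightarrow> 'y::euclidean_space) \<Rightarrow> ('x \<Rightarrow> 'q \<Rightarrow> ('x \<Rightarrow>\<^sub>L 'y))
    \<Rightarrow> 'x \<Rightarrow> 'q \<Rightarrow> 'x \<Rightarrow> 'y" where
  "lin_g G DG xk xik z = G xk xik + blinfun_apply (DG xk xik) (z - xk)"

definition lin_AL :: "'y::euclidean_space set \<Rightarrow> real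
    \<Rightarrow> ('x::euclidean_space \<Rightarrow> 'q \<Rightarrow> real) \<Rightarrow> ('x \<Rightarrow> 'q \<Rightarrow> 'x)
    \<Rightarrow> ('x \<Rightarrow> 'q \<Rightarrow> 'y) \<Rightarrow> ('x \<Rightarrow> 'q \<Rightarrow> ('x \<Rightarrow>\<^sub>L 'y))
    \<Rightarrow> 'x \<Rightarrow> 'q \<Rightarrow> 'x \<Rightarrow> 'y \<Rightarrow> real" where
  "lin_AL K \<sigma> F gradF G DG xk xik z y =
     lin_f F gradF xk xik z
     + (1 / (2 * \<sigma>)) * ((norm (proj_polar K (y + \<sigma> *\<^sub>R lin_g G DG xk xik z)))\<^sup>2 - (norm y)\<^sup>2)"

end

theory Submission
  imports Defs
begin

text \<open>With \<open>\<Pi>\<close> the projection onto the polar cone, \<open>w \<mapsto> \<parallel>\<Pi> w\<parallel>\<^sup>2\<close> is convex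
  with subgradient \<open>2 \<Pi> w\<close>, so the linearized augmented Lagrangian \<open>\<phi>\<close> at \<open>x\<^sup>k\<close> is
  convex. Since \<open>x\<^sup>k\<^sup>+\<^sup>1\<close> minimizes the \<open>1/\<sigma>\<close>-strongly convex function
  \<open>\<phi> + \<parallel>\<cdot> - x\<^sup>k\<parallel>\<^sup>2/(2\<sigma>)\<close> over the convex set \<open>X\<close>, it decreases \<open>\<phi>\<close> by at least
  \<open>\<parallel>x\<^sup>k\<^sup>+\<^sup>1 - x\<^sup>k\<parallel>\<^sup>2/\<sigma>\<close>. On the other hand \<open>\<phi>\<close> has at \<open>x\<^sup>k\<close> a subgradient of norm at most
  \<open>\<kappa>\<^sub>f + \<kappa>\<^sub>g \<parallel>y\<^sup>k + \<sigma> G(x\<^sup>k,\<xi>\<^sub>k)\<parallel> \<le> \<kappa>\<^sub>f + \<kappa>\<^sub>g (\<parallel>y\<^sup>k\<parallel> + \<sigma> \<nu>\<^sub>g)\<close>, so the decrease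
  is at most this constant times \<open>\<parallel>x\<^sup>k\<^sup>+\<^sup>1 - x\<^sup>k\<parallel>\<close>.\<close>

lemma polar_cone_eq_Inter: "polar_cone K = (\<Inter>w\<in>K. {v. inner w v \<le> 0})"
  unfolding polar_cone_def by (auto simp: inner_commute)

lemma closed_polar_cone: "closed (polar_cone K)"
  unfolding polar_cone_eq_Inter by (simp add: closed_INT closed_halfspace_le)

lemma convex_polar_cone: "convex (polar_cone K)"
  unfolding polar_cone_eq_Inter by (simp add: convex_INT convex_halfspace_le)

lemma zero_in_polar_cone: "0 \<in> polar_cone K"
  unfolding polar_cone_def by auto

lemma polar_cone_scaleR: "v \<in> polar_cone K \<Longrightarrow> 0 \<le> s \<Longrightarrow> s *\<^sub>R v \<in> polar_cone K"
  unfolding polar_cone_def by (auto intro: mult_nonneg_nonpos)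

lemma proj_polar_in_polar_cone: "proj_polar K w \<in> polar_cone K"
  unfolding proj_polar_def
  using closest_point_in_set[OF closed_polar_cone] zero_in_polar_cone by blast

lemma proj_polar_dot:
  "v \<in> polar_cone K \<Longrightarrow> inner (w - proj_polar K w) (v - proj_polar K w) \<le> 0"
  unfolding proj_polar_def by (rule closest_point_dot[OF convex_polar_cone closed_polar_cone])

text \<open>Testing the variational inequality with \<open>v = 0\<close> and \<open>v = 2 \<Pi>(w)\<close>.\<close>
lemma proj_polar_orthogonal: "inner (w - proj_polar K w) (proj_polar K w) = 0"
proof -
  let ?p = "proj_polar K w"
  have "inner (w - ?p) (0 - ?p) \<le> 0"
    using proj_polar_dot zero_in_polar_cone by blast
  moreover have "inner (w - ?p) (2 *\<^sub>R ?p - ?p) \<le> 0"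
    using proj_polar_dot[OF polar_cone_scaleR[OF proj_polar_in_polar_cone, of 2]] by simp
  ultimately show ?thesis
    by (simp add: inner_diff_right algebra_simps)
qed

lemma inner_proj_polar_self: "inner (proj_polar K w) w = (norm (proj_polar K w))\<^sup>2"
proof -
  have "inner w (proj_polar K w) = inner (proj_polar K w) (proj_polar K w)"
    using proj_polar_orthogonal[of w K] by (simp add: inner_diff_left)
  then show ?thesis
    by (simp add: inner_commute power2_norm_eq_inner)
qed

lemma inner_residual_proj_polar_le:
  "v \<in> polar_cone K \<Longrightarrow> inner (w - proj_polar K w) v \<le> 0"
  using proj_polar_dot[of v K w] proj_polar_orthogonal[of w K] by (simp add: inner_diff_right)

lemma norm_proj_polar_le: "norm (proj_polar K w) \<le> norm w"
proof -
  let ?p = "proj_polar K w"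
  have "norm ?p * norm ?p = inner ?p w"
    by (simp add: inner_proj_polar_self power2_eq_square)
  also have "\<dots> \<le> norm ?p * norm w"
    by (rule norm_cauchy_schwarz)
  finally show ?thesis
    by (cases "?p = 0") auto
qed

lemma norm_proj_polar_sq_subgradient:
  "(norm (proj_polar K w))\<^sup>2 + 2 * inner (proj_polar K w) (w' - w) \<le> (norm (proj_polar K w'))\<^sup>2"
proof -
  let ?p = "proj_polar K w" and ?q = "proj_polar K w'"
  have "inner ?p w' \<le> inner ?p ?q"
    using inner_residual_proj_polar_le[OF proj_polar_in_polar_cone[of K w], of w']
    by (simp add: inner_diff_left inner_diff_right inner_commute)
  moreover have "inner ?p (w' - w) = inner ?p w' - (norm ?p)\<^sup>2"
    by (simp add: inner_diff_right inner_proj_polar_self)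
  moreover have "0 \<le> (norm (?q - ?p))\<^sup>2"
    by simp
  moreover have "(norm (?q - ?p))\<^sup>2 = (norm ?q)\<^sup>2 - 2 * inner ?p ?q + (norm ?p)\<^sup>2"
    by (simp add: power2_norm_eq_inner inner_diff_left inner_diff_right inner_commute)
  ultimately show ?thesis
    by linarith
qed

lemma convex_on_norm_proj_polar_sq: "convex_on UNIV (\<lambda>w. (norm (proj_polar K w))\<^sup>2)"
proof (rule convex_onI)
  fix t :: real and u v :: 'a
  assume t: "0 < t" "t < 1"
  let ?m = "(1 - t) *\<^sub>R u + t *\<^sub>R v"
  let ?p = "proj_polar K ?m"
  have "(1 - t) * ((norm ?p)\<^sup>2 + 2 * inner ?p (u - ?m)) \<le> (1 - t) * (norm (proj_polar K u))\<^sup>2"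
    using t by (intro mult_left_mono norm_proj_polar_sq_subgradient) auto
  moreover have "t * ((norm ?p)\<^sup>2 + 2 * inner ?p (v - ?m)) \<le> t * (norm (proj_polar K v))\<^sup>2"
    using t by (intro mult_left_mono norm_proj_polar_sq_subgradient) auto
  moreover have "(1 - t) * inner ?p (u - ?m) + t * inner ?p (v - ?m) = 0"
  proof -
    have "(1 - t) *\<^sub>R (u - ?m) + t *\<^sub>R (v - ?m) = 0"
      by (simp add: algebra_simps)
    then show ?thesis
      by (metis inner_add_right inner_scaleR_right inner_zero_right)
  qed
  ultimately show "(norm (proj_polar K ?m))\<^sup>2
      \<le> (1 - t) * (norm (proj_polar K u))\<^sup>2 + t * (norm (proj_polar K v))\<^sup>2"
    by (simp add: algebra_simps)
qed simp

lemma convex_on_compose_affine: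
  assumes "convex_on UNIV f" and "linear L"
  shows "convex_on UNIV (\<lambda>z. f (L z + c))"
proof (rule convex_onI)
  fix t :: real and x y
  assume "0 < t" "t < 1"
  have "L ((1 - t) *\<^sub>R x + t *\<^sub>R y) = (1 - t) *\<^sub>R L x + t *\<^sub>R L y"
    by (simp only: linear_add[OF assms(2)] linear_scale[OF assms(2)])
  then have "L ((1 - t) *\<^sub>R x + t *\<^sub>R y) + c = (1 - t) *\<^sub>R (L x + c) + t *\<^sub>R (L y + c)"
    by (simp add: algebra_simps)
  then show "f (L ((1 - t) *\<^sub>R x + t *\<^sub>R y) + c) \<le> (1 - t) * f (L x + c) + t * f (L y + c)"
    using convex_onD[OF assms(1), of t "L x + c" "L y + c"] \<open>0 < t\<close> \<open>t < 1\<close> by simp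
qed simp

lemma prox_minimizer_sufficient_decrease:
  fixes \<phi> :: "'a::real_inner \<Rightarrow> real"
  assumes X: "convex X" and \<phi>: "convex_on X \<phi>" and a: "a \<in> X" and b: "b \<in> X"
    and \<sigma>: "0 < \<sigma>"
    and b_min: "\<forall>z\<in>X. \<phi> b + (1 / (2 * \<sigma>)) * (norm (b - a))\<^sup>2
                      \<le> \<phi> z + (1 / (2 * \<sigma>)) * (norm (z - a))\<^sup>2"
  shows "(norm (b - a))\<^sup>2 / \<sigma> \<le> \<phi> a - \<phi> b"
proof -
  define c where "c = 1 / (2 * \<sigma>)"
  let ?n = "norm (b - a)"
  have chord: "c * (2 - t) * ?n\<^sup>2 \<le> \<phi> a - \<phi> b" if t: "0 < t" "t \<le> 1" for t
  proof -
    define z where "z = (1 - t) *\<^sub>R b + t *\<^sub>R a"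
    have "z - a = (1 - t) *\<^sub>R (b - a)"
      by (simp add: z_def algebra_simps)
    then have "norm (z - a) = (1 - t) * ?n"
      using t by simp
    moreover have "z \<in> X"
      using X a b t unfolding z_def convex_alt by simp
    then have "\<phi> b + c * ?n\<^sup>2 \<le> \<phi> z + c * (norm (z - a))\<^sup>2"
      using b_min unfolding c_def by blast
    moreover have "\<phi> z \<le> (1 - t) * \<phi> b + t * \<phi> a"
      unfolding z_def using convex_onD[OF \<phi>, of t b a] t a b by simp
    ultimately have "\<phi> b + c * ?n\<^sup>2 \<le> (1 - t) * \<phi> b + t * \<phi> a + c * ((1 - t) * ?n)\<^sup>2"
      by simp
    then have "t * (c * (2 - t) * ?n\<^sup>2) \<le> t * (\<phi> a - \<phi> b)"
      by (simp add: algebra_simps power2_eq_square)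
    then show ?thesis
      using t by simp
  qed
  have "((\<lambda>t. c * (2 - t) * ?n\<^sup>2) \<longlongrightarrow> c * (2 - 0) * ?n\<^sup>2) (at_right 0)"
    by (intro tendsto_intros)
  moreover have "eventually (\<lambda>t. c * (2 - t) * ?n\<^sup>2 \<le> \<phi> a - \<phi> b) (at_right 0)"
    unfolding eventually_at_right_field using chord by (intro exI[of _ 1]) auto
  ultimately have "c * (2 - 0) * ?n\<^sup>2 \<le> \<phi> a - \<phi> b"
    by (rule tendsto_upperbound) simp
  then show ?thesis
    using \<sigma> by (simp add: c_def)
qed

lemma prox_step_norm_le:
  fixes \<phi> :: "'a::real_inner \<Rightarrow> real"
  assumes "convex X" "convex_on X \<phi>" "a \<in> X" "b \<in> X" "0 < \<sigma>"
    and "\<forall>z\<in>X. \<phi> b + (1 / (2 * \<sigma>)) * (norm (b - a))\<^sup>2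
                \<le> \<phi> z + (1 / (2 * \<sigma>)) * (norm (z - a))\<^sup>2"
    and decrease: "\<phi> a - \<phi> b \<le> M * norm (b - a)" and "0 \<le> M"
  shows "norm (b - a) \<le> \<sigma> * M"
proof (cases "b = a")
  case False
  have "norm (b - a) * norm (b - a) / \<sigma> \<le> M * norm (b - a)"
    using prox_minimizer_sufficient_decrease[OF assms(1-6)] decrease
    by (simp add: power2_eq_square)
  then show ?thesis
    using False \<open>0 < \<sigma>\<close> by (simp add: field_simps)
qed (use assms in simp)

lemma convex_on_lin_AL:
  assumes "0 < \<sigma>"
  shows "convex_on UNIV (\<lambda>z. lin_AL K \<sigma> F gradF G DG a \<xi> z y)"
proof -
  have lin_f: "lin_f F gradF a \<xi> z = inner (gradF a \<xi>) z + (F a \<xi> - inner (gradF a \<xi>) a)" for z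
    by (simp add: lin_f_def inner_diff_right)
  have lin_g: "y + \<sigma> *\<^sub>R lin_g G DG a \<xi> z
      = \<sigma> *\<^sub>R DG a \<xi> z + (y + \<sigma> *\<^sub>R (G a \<xi> - DG a \<xi> a))" for z
    by (simp add: lin_g_def blinfun.diff_right algebra_simps)
  have "linear (\<lambda>z. \<sigma> *\<^sub>R blinfun_apply (DG a \<xi>) z)"
    by (simp add: linear_iff blinfun.add_right blinfun.scaleR_right scaleR_add_right)
  moreover have "linear (inner (gradF a \<xi>))"
    by (simp add: bounded_linear.linear bounded_linear_inner_right)
  moreover have "convex_on UNIV (\<lambda>r::real. r)"
    by (simp add: convex_on_ident)
  ultimately have "convex_on UNIV (\<lambda>z. lin_f F gradF a \<xi> z)"
    and "convex_on UNIV (\<lambda>z. (norm (proj_polar K (y + \<sigma> *\<^sub>R lin_g G DG a \<xi> z)))\<^sup>2)"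
    unfolding lin_f lin_g
    by (auto intro: convex_on_compose_affine convex_on_norm_proj_polar_sq)
  then show ?thesis
    unfolding lin_AL_def using assms
    by (intro convex_on_add convex_on_cmul convex_on_diff) (auto simp: concave_on_const)
qed

lemma lin_AL_decrease_le:
  assumes "0 < \<sigma>"
  shows "lin_AL K \<sigma> F gradF G DG a \<xi> a y - lin_AL K \<sigma> F gradF G DG a \<xi> b y
    \<le> (norm (gradF a \<xi>) + norm (DG a \<xi>) * norm (y + \<sigma> *\<^sub>R G a \<xi>)) * norm (b - a)"
proof -
  let ?g = "gradF a \<xi>" and ?D = "DG a \<xi>" and ?d = "b - a" and ?w = "y + \<sigma> *\<^sub>R G a \<xi>"
  let ?p = "proj_polar K ?w" and ?q = "\<lambda>v. (norm (proj_polar K v))\<^sup>2"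
  have "lin_AL K \<sigma> F gradF G DG a \<xi> a y - lin_AL K \<sigma> F gradF G DG a \<xi> b y
      = - inner ?g ?d - (1 / (2 * \<sigma>)) * (?q (?w + \<sigma> *\<^sub>R ?D ?d) - ?q ?w)"
    by (simp add: lin_AL_def lin_f_def lin_g_def blinfun.zero_right algebra_simps)
  moreover have "?q ?w + 2 * inner ?p (\<sigma> *\<^sub>R ?D ?d) \<le> ?q (?w + \<sigma> *\<^sub>R ?D ?d)"
    using norm_proj_polar_sq_subgradient[of K ?w "?w + \<sigma> *\<^sub>R ?D ?d"] by simp
  then have "inner ?p (?D ?d) \<le> (1 / (2 * \<sigma>)) * (?q (?w + \<sigma> *\<^sub>R ?D ?d) - ?q ?w)"
    using assms by (simp add: pos_le_divide_eq mult.commute mult.left_commute)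
  moreover have "- inner ?g ?d \<le> norm ?g * norm ?d"
    using Cauchy_Schwarz_ineq2[of ?g ?d] by linarith
  moreover have "- inner ?p (?D ?d) \<le> norm ?D * norm ?w * norm ?d"
  proof -
    have "\<bar>inner ?p (?D ?d)\<bar> \<le> norm ?p * norm (?D ?d)"
      by (rule Cauchy_Schwarz_ineq2)
    also have "\<dots> \<le> norm ?w * (norm ?D * norm ?d)"
      by (intro mult_mono norm_proj_polar_le norm_blinfun) auto
    finally show ?thesis
      by (simp add: algebra_simps)
  qed
  ultimately show ?thesis
    by (simp add: distrib_right)
qed

theorem corollary3p1:
  fixes K :: "'y::euclidean_space set"
    and X U :: "'x::euclidean_space set"
    and Xi :: "'q::euclidean_space set"
    and F :: "'x \<Rightarrow> 'q \<Rightarrow> real" and gradF :: "'x \<Rightarrow> 'q \<Rightarrow> 'x"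
    and G :: "'x \<Rightarrow> 'q \<Rightarrow> 'y" and DG :: "'x \<Rightarrow> 'q \<Rightarrow> ('x \<Rightarrow>\<^sub>L 'y)"
    and xi :: "nat \<Rightarrow> 'q"
    and x :: "nat \<Rightarrow> 'x" and y :: "nat \<Rightarrow> 'y"
    and \<sigma> \<nu>g \<kappa>f \<kappa>g :: real
  assumes K_cone: "closed K" "convex_cone K"
    and X_ne: "X \<noteq> {}" and X_cvx: "convex X" and X_cpt: "compact X"
    and O_open: "open U" and O_cvx: "convex U" and XO: "X \<subseteq> U"
    and F_deriv: "\<And>\<xi> z. \<xi> \<in> Xi \<Longrightarrow> z \<in> U \<Longrightarrow>
         ((\<lambda>u. F u \<xi>) has_derivative (\<lambda>h. inner (gradF z \<xi>) h)) (at z)"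
    and G_deriv: "\<And>\<xi> z. \<xi> \<in> Xi \<Longrightarrow> z \<in> U \<Longrightarrow>
         ((\<lambda>u. G u \<xi>) has_derivative blinfun_apply (DG z \<xi>)) (at z)"
    and gradF_cont: "\<And>\<xi>. \<xi> \<in> Xi \<Longrightarrow> continuous_on U (\<lambda>u. gradF u \<xi>)"
    and DG_cont: "\<And>\<xi>. \<xi> \<in> Xi \<Longrightarrow> continuous_on U (\<lambda>u. DG u \<xi>)"
    and samples: "\<And>k. k \<ge> 1 \<Longrightarrow> xi k \<in> Xi"
    and D2: "\<nu>g > 0" "\<And>z \<xi>. z \<in> U \<Longrightarrow> \<xi> \<in> Xi \<Longrightarrow> norm (G z \<xi>) \<le> \<nu>g"
    and D3: "\<kappa>f > 0" "\<kappa>g > 0"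
      "\<And>z \<xi>. z \<in> U \<Longrightarrow> \<xi> \<in> Xi \<Longrightarrow> norm (gradF z \<xi>) \<le> \<kappa>f"
      "\<And>z \<xi>. z \<in> U \<Longrightarrow> \<xi> \<in> Xi \<Longrightarrow> norm (DG z \<xi>) \<le> \<kappa>g"
    and sigma_pos: "\<sigma> > 0"
    and x1: "x 1 \<in> X" and y1: "y 1 = 0"
    and x_step: "\<And>k. k \<ge> 1 \<Longrightarrow> x (Suc k) \<in> X \<and>
        (\<forall>z\<in>X. lin_AL K \<sigma> F gradF G DG (x k) (xi k) (x (Suc k)) (y k)
                    + (1 / (2 * \<sigma>)) * (norm (x (Suc k) - x k))\<^sup>2
                 \<le> lin_AL K \<sigma> F gradF G DG (x k) (xi k) z (y k)
                    + (1 / (2 * \<sigma>)) * (norm (z - x k))\<^sup>2)"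
    and y_step: "\<And>k. k \<ge> 1 \<Longrightarrow>
        y (Suc k) = proj_polar K (y k + \<sigma> *\<^sub>R lin_g G DG (x k) (xi k) (x (Suc k)))"
  shows "\<forall>k\<ge>1. norm (x (Suc k) - x k) \<le> \<sigma> * ((\<kappa>f + \<nu>g * \<kappa>g * \<sigma>) + \<kappa>g * norm (y k))"
proof (intro allI impI)
  fix k :: nat
  assume k: "1 \<le> k"
  have x_in_X: "x j \<in> X" if "1 \<le> j" for j
    using that by (induction j rule: dec_induct) (use x1 x_step in auto)
  let ?\<phi> = "\<lambda>z. lin_AL K \<sigma> F gradF G DG (x k) (xi k) z (y k)"
  let ?bound = "\<kappa>f + \<nu>g * \<kappa>g * \<sigma> + \<kappa>g * norm (y k)"
  have xk: "x k \<in> U" and \<xi>k: "xi k \<in> Xi"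
    using x_in_X[OF k] XO samples[OF k] by auto
  have "norm (\<sigma> *\<^sub>R G (x k) (xi k)) \<le> \<sigma> * \<nu>g"
    using D2(2)[OF xk \<xi>k] sigma_pos by (simp add: mult_left_mono)
  then have "norm (y k + \<sigma> *\<^sub>R G (x k) (xi k)) \<le> norm (y k) + \<sigma> * \<nu>g"
    by (intro norm_triangle_le) simp
  then have "norm (DG (x k) (xi k)) * norm (y k + \<sigma> *\<^sub>R G (x k) (xi k))
      \<le> \<kappa>g * (norm (y k) + \<sigma> * \<nu>g)"
    using D3(2) D3(4)[OF xk \<xi>k] by (intro mult_mono) auto
  then have "norm (gradF (x k) (xi k)) + norm (DG (x k) (xi k)) * norm (y k + \<sigma> *\<^sub>R G (x k) (xi k))
      \<le> ?bound"
    using D3(3)[OF xk \<xi>k] by (simp add: algebra_simps)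
  then have decrease: "?\<phi> (x k) - ?\<phi> (x (Suc k)) \<le> ?bound * norm (x (Suc k) - x k)"
    using lin_AL_decrease_le[OF sigma_pos] by (meson mult_right_mono norm_ge_zero order_trans)
  show "norm (x (Suc k) - x k) \<le> \<sigma> * ((\<kappa>f + \<nu>g * \<kappa>g * \<sigma>) + \<kappa>g * norm (y k))"
    using prox_step_norm_le[OF X_cvx convex_on_subset[OF convex_on_lin_AL[OF sigma_pos] subset_UNIV X_cvx]
        x_in_X[OF k] x_step[OF k, THEN conjunct1] sigma_pos x_step[OF k, THEN conjunct2] decrease]
      sigma_pos D2(1) D3(1,2)
    by (simp add: algebra_simps)
qed

end
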